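(* Let $\varepsilon>0$. There exists $c>0$ such that for every $b>c$ and every conformal embedding $\varphi:B(b)/\mathbb{Z}\to\mathbb{C}/\mathbb{Z}$ with $\varphi(0)=0$ and $\varphi_*(1)=1$ on fundamental groups, the restriction of $\varphi$ to $B(b-c)/\mathbb{Z}$ is within $\varepsilon$ of the identity.
   Context: For $b>0$, $B(b)=\{z\in\mathbb{C}:|\operatorname{Im}z|<b\}$, and $B(b)/\mathbb{Z}$ is its quotient by $z\mapsto z+1$, a subcylinder of $\mathbb{C}/\mathbb{Z}$. Fundamental groups of $B(b)/\mathbb{Z}$ and $\mathbb{C}/\mathbb{Z}$ are both identified with $\mathbb{Z}$ (generated by the image of $[0,1]$). "Within $\varepsilon$ of the identity" means the Euclidean distance in $\mathbb{C}/\mathbb{Z}$ between $\varphi(z)$ and $z$ is at most $\varepsilon$ for every $z\in B(b-c)/\mathbb{Z}$. *)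

theory Defs
  imports "HOL-Complex_Analysis.Complex_Analysis"
begin

definition strip :: "real \<Rightarrow> complex set" where
  "strip b = {z. \<bar>Im z\<bar> < b}"

text \<open>A conformal embedding phi of B(b)/Z into C/Z with phi_*(1) = 1 on fundamental
groups, described by its lift F : B(b) \<rightarrow> C to the universal covers.
The lift is holomorphic, satisfies F(z+1) = F(z)+1 (this is exactly phi_*(1) = 1),
and the induced map on the quotients is injective.\<close>
definition cyl_embedding_lift :: "real \<Rightarrow> (complex \<Rightarrow> complex) \<Rightarrow> bool" where
  "cyl_embedding_lift b F \<longleftrightarrow>
     F holomorphic_on strip b \<and>
     (\<forall>z\<in>strip b. F (z + 1) = F z + 1) \<and>
     (\<forall>z\<in>strip b. \<forall>w\<in>strip b. F z - F w \<in> \<int> \<longrightarrow> z - w \<in> \<int>)"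

definition cyl_dist :: "complex \<Rightarrow> complex \<Rightarrow> real" where
  "cyl_dist u v = (INF k::int. cmod (u - v - of_int k))"

end

theory Submission
  imports Defs
begin

text \<open>Write \<open>F z = z + disp z\<close>, so that \<open>disp\<close> is holomorphic and 1-periodic. On each horizontal
  line, \<open>disp\<close> stays within \<open>line_length y = \<integral>\<^sub>0\<^sup>1 \<bar>disp'\<bar>\<close> of its mean over the line, and this mean
  does not depend on \<open>y\<close>; with the maximum modulus principle this bounds \<open>\<bar>disp - mean\<bar>\<close> on the
  substrip \<open>\<bar>Im z\<bar> \<le> h\<close> by the line lengths at \<open>\<plusminus>h\<close>. Since \<open>F\<close> is injective, comparing the area of
  \<open>F ([0, N] \<times> [-h, h])\<close> with that of an enclosing rectangle bounds the energy
  \<open>E h = \<integral>\<^sub>-\<^sub>h\<^sup>h \<integral>\<^sub>0\<^sup>1 \<bar>disp'\<bar>\<^sup>2\<close> by the same line lengths, and Cauchy--Schwarz turns this into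
  \<open>E\<^sup>2 \<le> 8 E'\<close>, whence \<open>E h \<le> 16 / (b - h)\<close>. So \<open>disp\<close> is nearly constant far from the boundary,
  and \<open>disp 0 = F 0\<close> is an integer.\<close>

lemma vector_2_eta: "vector [v $ 1, v $ 2] = (v :: 'a::zero^2)"
  by (simp add: vec_eq_iff forall_2)

lemma vector_2_eq_iff: "vector [x, y] = (vector [x', y'] :: 'a::zero^2) \<longleftrightarrow> x = x' \<and> y = y'"
  by (metis vector_2)

lemma mem_cbox_vector_2:
  fixes v :: "real^2"
  shows "v \<in> cbox (vector [a, c]) (vector [b, d]) \<longleftrightarrow> a \<le> v $ 1 \<and> v $ 1 \<le> b \<and> c \<le> v $ 2 \<and> v $ 2 \<le> d"
  by (simp add: mem_box_cart forall_2)

lemma content_cbox_vector_2: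
  "measure lborel (cbox (vector [a, c]) (vector [b, d]) :: (real^2) set) = measure lborel {a..b} * measure lborel {c..d}"
proof (cases "a \<le> b \<and> c \<le> d")
  case True
  then have "cbox (vector [a, c]) (vector [b, d]) \<noteq> ({} :: (real^2) set)"
    using mem_cbox_vector_2[of "vector [a, c]" a c b d] by auto
  with True show ?thesis by (simp add: content_cbox_cart UNIV_2)
next
  case False
  then have "cbox (vector [a, c]) (vector [b, d]) = ({} :: (real^2) set)"
    by (auto simp: mem_cbox_vector_2)
  with False show ?thesis by auto
qed

lemma image_swap_vector_cbox:
  "(\<lambda>(y, x). vector [x, y] :: real^2) ` cbox (c, a) (d, b) = cbox (vector [a, c]) (vector [b, d])"
proof (intro equalityI subsetI)
  fix v :: "real^2" assume "v \<in> cbox (vector [a, c]) (vector [b, d])"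
  then have "(v $ 2, v $ 1) \<in> cbox (c, a) (d, b)"
    by (auto simp: cbox_Pair_iff mem_cbox_vector_2)
  moreover have "v = (\<lambda>(y, x). vector [x, y]) (v $ 2, v $ 1)"
    by (simp add: vector_2_eta)
  ultimately show "v \<in> (\<lambda>(y, x). vector [x, y]) ` cbox (c, a) (d, b)"
    by blast
qed (auto simp: cbox_Pair_iff mem_cbox_vector_2)

lemma integral_cart2_eq_integral_prod:
  fixes f :: "real^2 \<Rightarrow> real"
  assumes "f integrable_on cbox (vector [a, c]) (vector [b, d])"
  shows "integral (cbox (c, a) (d, b)) (\<lambda>(y, x). f (vector [x, y])) =
         integral (cbox (vector [a, c]) (vector [b, d])) f"
proof -
  define \<iota> :: "real \<times> real \<Rightarrow> real^2" where "\<iota> = (\<lambda>(y, x). vector [x, y])"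
  define \<kappa> :: "real^2 \<Rightarrow> real \<times> real" where "\<kappa> = (\<lambda>v. (v $ 2, v $ 1))"
  have \<iota>_cbox: "\<iota> ` cbox (u2, u1) (v2, v1) = cbox (vector [u1, u2]) (vector [v1, v2])" for u1 u2 v1 v2
    unfolding \<iota>_def by (rule image_swap_vector_cbox)
  have \<kappa>_\<iota>: "\<kappa> (\<iota> p) = p" for p
    by (auto simp: \<kappa>_def \<iota>_def split: prod.splits)
  have \<iota>_\<kappa>: "\<iota> (\<kappa> v) = v" for v
    by (simp add: \<kappa>_def \<iota>_def vector_2_eta)
  have \<kappa>_cbox: "\<kappa> ` cbox u v = cbox (u $ 2, u $ 1) (v $ 2, v $ 1)" for u v
  proof -
    have "\<kappa> ` cbox u v = \<kappa> ` \<iota> ` cbox (u $ 2, u $ 1) (v $ 2, v $ 1)"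
      by (simp only: \<iota>_cbox vector_2_eta)
    also have "\<dots> = cbox (u $ 2, u $ 1) (v $ 2, v $ 1)"
      by (simp add: image_image \<kappa>_\<iota>)
    finally show ?thesis .
  qed
  have "linear \<iota>"
    unfolding \<iota>_def by (rule linearI) (auto simp: vec_eq_iff forall_2)
  have "((\<lambda>p. f (\<iota> p)) has_integral (1 / 1) *\<^sub>R integral (cbox (vector [a, c]) (vector [b, d])) f)
          (\<kappa> ` cbox (vector [a, c]) (vector [b, d]))"
  proof (rule has_integral_twiddle[where g = \<iota> and h = \<kappa> and r = 1])
    show "continuous (at p) \<iota>" for p
      using \<open>linear \<iota>\<close> by (simp add: linear_continuous_at linear_conv_bounded_linear)
    show "\<exists>w z. \<iota> ` cbox p q = cbox w z" for p q
      using \<iota>_cbox by (metis prod.exhaust)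
    show "\<exists>w z. \<kappa> ` cbox u v = cbox w z" for u v
      using \<kappa>_cbox by blast
    show "measure lborel (\<iota> ` cbox p q) = 1 * measure lborel (cbox p q)" for p q
    proof -
      obtain p2 p1 q2 q1 where "p = (p2, p1)" "q = (q2, q1)" by fastforce
      then show ?thesis
        by (simp add: \<iota>_cbox content_cbox_vector_2 content_Pair del: content_real_if)
    qed
  qed (use assms \<kappa>_\<iota> \<iota>_\<kappa> has_integral_integral in auto)
  then show ?thesis
    by (simp add: \<kappa>_cbox \<iota>_def case_prod_unfold integral_unique)
qed

lemma det_matrix_complex_mult:
  "det (matrix (\<lambda>u::real^2. vector [Re (A * Complex (u $ 1) (u $ 2)), Im (A * Complex (u $ 1) (u $ 2))]))
     = (cmod A)\<^sup>2"
  by (simp add: det_2 matrix_def axis_def cmod_power2 algebra_simps) (simp add: power2_eq_square)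

lemma has_derivative_cart2_of_complex:
  fixes v :: "real^2"
  assumes "(F has_field_derivative F') (at (Complex (v $ 1) (v $ 2)))"
  shows "((\<lambda>v. vector [Re (F (Complex (v $ 1) (v $ 2))), Im (F (Complex (v $ 1) (v $ 2)))] :: real^2)
          has_derivative (\<lambda>u. vector [Re (F' * Complex (u $ 1) (u $ 2)), Im (F' * Complex (u $ 1) (u $ 2))]))
         (at v within R)"
proof -
  have "linear (\<lambda>v::real^2. Complex (v $ 1) (v $ 2))" "linear (\<lambda>z. vector [Re z, Im z] :: real^2)"
    by (rule linearI; simp add: complex_eq_iff vec_eq_iff forall_2)+
  then have "bounded_linear (\<lambda>v::real^2. Complex (v $ 1) (v $ 2))"
    "bounded_linear (\<lambda>z. vector [Re z, Im z] :: real^2)"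
    by (simp_all add: linear_conv_bounded_linear)
  note linear_deriv = this[THEN bounded_linear_imp_has_derivative]
  have "(F has_derivative (\<lambda>h. F' * h)) (at (Complex (v $ 1) (v $ 2)))"
    using assms by (simp add: has_field_derivative_def)
  from has_derivative_compose[OF has_derivative_compose[OF linear_deriv(1) this] linear_deriv(2)]
  show ?thesis by simp
qed

text \<open>The Jacobian of a holomorphic map is \<open>\<bar>F'\<bar>\<^sup>2\<close>, so this is the change of variables formula.\<close>

lemma measure_holomorphic_image_cart2:
  fixes F :: "complex \<Rightarrow> complex" and u w :: "real^2"
  assumes holF: "F holomorphic_on S" and "open S" and inj: "inj_on F S"
    and in_S: "\<And>v. v \<in> cbox u w \<Longrightarrow> Complex (v $ 1) (v $ 2) \<in> S"
  defines "\<Phi> \<equiv> \<lambda>v::real^2. vector [Re (F (Complex (v $ 1) (v $ 2))), Im (F (Complex (v $ 1) (v $ 2)))] :: real^2"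
  shows "(\<lambda>v. (cmod (deriv F (Complex (v $ 1) (v $ 2))))\<^sup>2) integrable_on cbox u w"
    and "\<Phi> ` cbox u w \<in> lmeasurable"
    and "measure lebesgue (\<Phi> ` cbox u w) = integral (cbox u w) (\<lambda>v. (cmod (deriv F (Complex (v $ 1) (v $ 2))))\<^sup>2)"
proof -
  define \<Phi>' :: "real^2 \<Rightarrow> real^2 \<Rightarrow> real^2"
    where "\<Phi>' = (\<lambda>v u. vector [Re (deriv F (Complex (v $ 1) (v $ 2)) * Complex (u $ 1) (u $ 2)),
                               Im (deriv F (Complex (v $ 1) (v $ 2)) * Complex (u $ 1) (u $ 2))])"
  have deriv_\<Phi>: "(\<Phi> has_derivative \<Phi>' v) (at v within cbox u w)" if "v \<in> cbox u w" for v
    unfolding \<Phi>_def \<Phi>'_def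
    by (intro has_derivative_cart2_of_complex holomorphic_derivI[OF holF \<open>open S\<close> in_S[OF that]])
  have det_\<Phi>': "\<bar>det (matrix (\<Phi>' v))\<bar> = (cmod (deriv F (Complex (v $ 1) (v $ 2))))\<^sup>2" for v
    using det_matrix_complex_mult[of "deriv F (Complex (v $ 1) (v $ 2))"] by (simp add: \<Phi>'_def)
  have "inj_on \<Phi> (cbox u w)"
  proof (rule inj_onI)
    fix v v' assume "v \<in> cbox u w" "v' \<in> cbox u w" "\<Phi> v = \<Phi> v'"
    then have "F (Complex (v $ 1) (v $ 2)) = F (Complex (v' $ 1) (v' $ 2))"
      by (simp add: \<Phi>_def vector_2_eq_iff complex_eq_iff)
    then have "Complex (v $ 1) (v $ 2) = Complex (v' $ 1) (v' $ 2)"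
      using inj in_S \<open>v \<in> cbox u w\<close> \<open>v' \<in> cbox u w\<close> by (auto dest: inj_onD)
    then show "v = v'" by (simp add: vec_eq_iff forall_2)
  qed
  have "continuous_on S (deriv F)"
    using holF \<open>open S\<close> by (simp add: holomorphic_deriv holomorphic_on_imp_continuous_on)
  moreover have "continuous_on (cbox u w) (\<lambda>v. Complex (v $ 1) (v $ 2))"
    unfolding Complex_eq by (intro continuous_intros)
  ultimately have "continuous_on (cbox u w) (\<lambda>v. deriv F (Complex (v $ 1) (v $ 2)))"
    by (rule continuous_on_compose2) (use in_S in auto)
  then show int: "(\<lambda>v. (cmod (deriv F (Complex (v $ 1) (v $ 2))))\<^sup>2) integrable_on cbox u w"
    by (intro integrable_continuous continuous_intros)
  then have int: "(\<lambda>v. \<bar>det (matrix (\<Phi>' v))\<bar>) integrable_on cbox u w"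
    by (simp add: det_\<Phi>')
  show "\<Phi> ` cbox u w \<in> lmeasurable"
    using measurable_differentiable_image_eq[OF _ deriv_\<Phi> \<open>inj_on \<Phi> (cbox u w)\<close>] int by simp
  show "measure lebesgue (\<Phi> ` cbox u w) = integral (cbox u w) (\<lambda>v. (cmod (deriv F (Complex (v $ 1) (v $ 2))))\<^sup>2)"
    using measure_differentiable_image_eq[OF _ deriv_\<Phi> \<open>inj_on \<Phi> (cbox u w)\<close> int] by (simp add: det_\<Phi>')
qed

lemma integral_norm_deriv_sq_le_area:
  fixes F :: "complex \<Rightarrow> complex"
  assumes "F holomorphic_on S" and "open S" and "inj_on F S"
    and rect: "\<And>x y. a \<le> x \<Longrightarrow> x \<le> b \<Longrightarrow> c \<le> y \<Longrightarrow> y \<le> d \<Longrightarrow>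
                 Complex x y \<in> S \<and> F (Complex x y) \<in> cbox (Complex a' c') (Complex b' d')"
    and "a \<le> b" "c \<le> d"
  shows "integral (cbox (c, a) (d, b)) (\<lambda>(y, x). (cmod (deriv F (Complex x y)))\<^sup>2) \<le> (b' - a') * (d' - c')"
proof -
  define R :: "(real^2) set" where "R = cbox (vector [a, c]) (vector [b, d])"
  define \<Phi> :: "real^2 \<Rightarrow> real^2" where "\<Phi> = (\<lambda>v. vector [Re (F (Complex (v $ 1) (v $ 2))), Im (F (Complex (v $ 1) (v $ 2)))])"
  have in_S: "\<And>v. v \<in> R \<Longrightarrow> Complex (v $ 1) (v $ 2) \<in> S"
    using rect by (auto simp: R_def mem_cbox_vector_2)
  note image = measure_holomorphic_image_cart2[where u = "vector [a, c]" and w = "vector [b, d]",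
    OF assms(1-3) in_S[unfolded R_def], folded \<Phi>_def R_def]
  have image_sub: "\<Phi> ` R \<subseteq> cbox (vector [a', c']) (vector [b', d'])"
    using rect by (auto simp: \<Phi>_def R_def mem_cbox_vector_2 in_cbox_complex_iff)
  have "vector [a, c] \<in> R" using \<open>a \<le> b\<close> \<open>c \<le> d\<close> by (simp add: R_def mem_cbox_vector_2)
  then have "a' \<le> b'" "c' \<le> d'"
    using image_sub by (auto simp: mem_cbox_vector_2)
  have "integral R (\<lambda>v. (cmod (deriv F (Complex (v $ 1) (v $ 2))))\<^sup>2) = measure lebesgue (\<Phi> ` R)"
    using image(3) by simp
  also have "\<dots> \<le> measure lebesgue (cbox (vector [a', c']) (vector [b', d']) :: (real^2) set)"
    using image(2) by (intro measure_mono_fmeasurable[OF image_sub]) auto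
  also have "\<dots> = (b' - a') * (d' - c')"
    using \<open>a' \<le> b'\<close> \<open>c' \<le> d'\<close> by (simp add: content_cbox_vector_2)
  finally show ?thesis
    using integral_cart2_eq_integral_prod[OF image(1)[unfolded R_def]] by (simp add: R_def)
qed

lemma open_strip: "open (strip b)"
  and convex_strip: "convex (strip b)"
proof -
  have "strip b = {z. Im z < b} \<inter> {z. Im z > -b}" by (auto simp: strip_def)
  then show "open (strip b)" "convex (strip b)"
    by (simp_all add: open_Int open_halfspace_Im_lt open_halfspace_Im_gt
        convex_Int convex_halfspace_Im_lt convex_halfspace_Im_gt)
qed

lemma Complex_mem_strip_iff [simp]: "Complex x y \<in> strip b \<longleftrightarrow> \<bar>y\<bar> < b"
  by (simp add: strip_def)

lemma add_of_int_mem_strip_iff [simp]: "z + of_int k \<in> strip b \<longleftrightarrow> z \<in> strip b"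
  and add_1_mem_strip_iff [simp]: "z + 1 \<in> strip b \<longleftrightarrow> z \<in> strip b"
  by (simp_all add: strip_def)

lemma shift_of_int_strip:
  assumes shift: "\<And>z. z \<in> strip b \<Longrightarrow> f (z + 1) = f z + c" and "z \<in> strip b"
  shows "f (z + of_int k) = f z + of_int k * c"
proof (induction k rule: int_induct[where k = 0])
  case (step1 i)
  have "f (z + of_int i + 1) = f (z + of_int i) + c"
    using shift \<open>z \<in> strip b\<close> by simp
  with step1 show ?case by (simp add: algebra_simps)
next
  case (step2 i)
  have "f (z + of_int i) = f (z + of_int (i - 1)) + c"
    using shift[of "z + of_int (i - 1)"] \<open>z \<in> strip b\<close> by (simp add: strip_def)
  with step2 show ?case by (simp add: algebra_simps)
qed simp

lemma continuous_on_horizontal: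
  assumes "continuous_on (strip b) h" "\<bar>y\<bar> < b"
  shows "continuous_on S (\<lambda>x. h (Complex x y))"
proof (rule continuous_on_compose2[OF assms(1)])
  show "continuous_on S (\<lambda>x. Complex x y)"
    unfolding Complex_eq by (intro continuous_intros)
qed (use assms(2) in auto)

lemma has_vector_derivative_horizontal:
  assumes "(h has_field_derivative h') (at (Complex x y))"
  shows "((\<lambda>t. h (Complex t y)) has_vector_derivative h') (at x within S)"
proof -
  have "((\<lambda>w. w + \<i> * of_real y) has_field_derivative 1) (at (of_real x))"
    by (auto intro!: derivative_eq_intros)
  moreover have "(h has_field_derivative h') (at (of_real x + \<i> * of_real y))"
    using assms by (simp add: Complex_eq)
  ultimately have "((\<lambda>w. h (w + \<i> * of_real y)) has_field_derivative h' * 1) (at (of_real x))"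
    by (intro DERIV_chain2[where g = "\<lambda>w. w + \<i> * of_real y"]) simp_all
  then show ?thesis
    using has_vector_derivative_real_field by (fastforce simp: Complex_eq)
qed

lemma has_integral_horizontal:
  assumes "s \<le> t" and deriv: "\<And>x. x \<in> {s..t} \<Longrightarrow> (f has_field_derivative f' (Complex x y)) (at (Complex x y))"
  shows "((\<lambda>x. f' (Complex x y)) has_integral f (Complex t y) - f (Complex s y)) {s..t}"
  using \<open>s \<le> t\<close> deriv
  by (intro fundamental_theorem_of_calculus has_vector_derivative_horizontal) auto

text \<open>A maximum of \<open>\<bar>\<phi>\<bar>\<close> on \<open>t1 \<le> Im z \<le> t2\<close> is attained in a period rectangle; if it were
  attained strictly inside, the maximum modulus principle would make \<open>\<phi>\<close> constant.\<close>

lemma periodic_norm_le_between_lines: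
  fixes \<phi> :: "complex \<Rightarrow> complex"
  assumes hol: "\<phi> holomorphic_on strip b" and per: "\<And>z. z \<in> strip b \<Longrightarrow> \<phi> (z + 1) = \<phi> z"
    and t: "-b < t1" "t1 \<le> t2" "t2 < b"
    and lines: "\<And>z. Im z = t1 \<or> Im z = t2 \<Longrightarrow> cmod (\<phi> z) \<le> M"
    and z: "t1 \<le> Im z" "Im z \<le> t2"
  shows "cmod (\<phi> z) \<le> M"
proof -
  define K where "K = cbox (Complex 0 t1) (Complex 1 t2)"
  have K_strip: "K \<subseteq> strip b" using t by (auto simp: K_def in_cbox_complex_iff strip_def)
  have "Complex 0 t1 \<in> K" using t by (simp add: K_def in_cbox_complex_iff)
  moreover have "continuous_on K (\<lambda>w. cmod (\<phi> w))"
    by (intro continuous_on_norm holomorphic_on_imp_continuous_on holomorphic_on_subset[OF hol K_strip])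
  ultimately obtain p where "p \<in> K" and p_max: "\<And>w. w \<in> K \<Longrightarrow> cmod (\<phi> w) \<le> cmod (\<phi> p)"
    using continuous_attains_sup[of K] by (metis K_def compact_cbox empty_iff)
  have bound: "cmod (\<phi> w) \<le> cmod (\<phi> p)" if "t1 \<le> Im w" "Im w \<le> t2" for w
  proof -
    define w' where "w' = w - of_int \<lfloor>Re w\<rfloor>"
    have "w' \<in> K" using that unfolding w'_def K_def in_cbox_complex_iff
      by (simp add: floor_le_iff) linarith
    then have "\<phi> (w' + of_int \<lfloor>Re w\<rfloor>) = \<phi> w'"
      using shift_of_int_strip[of b \<phi> 0] per K_strip by auto
    then show ?thesis using p_max[OF \<open>w' \<in> K\<close>] by (simp add: w'_def)
  qed
  have "cmod (\<phi> p) \<le> M"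
  proof (cases "Im p = t1 \<or> Im p = t2")
    case True
    then show ?thesis by (rule lines)
  next
    case False
    define U where "U = {w. t1 < Im w} \<inter> {w. Im w < t2}"
    have "open U" by (simp add: U_def open_Int open_halfspace_Im_lt open_halfspace_Im_gt)
    moreover have "U \<subseteq> strip b" "p \<in> U"
      using t \<open>p \<in> K\<close> False by (auto simp: U_def strip_def K_def in_cbox_complex_iff)
    moreover have "cmod (\<phi> w) \<le> cmod (\<phi> p)" if "w \<in> U" for w
      using that bound by (simp add: U_def)
    ultimately have "\<phi> constant_on strip b"
      using maximum_modulus_principle[OF hol open_strip convex_connected[OF convex_strip]] by blast
    moreover have "Complex 0 t1 \<in> strip b" "p \<in> strip b" using t \<open>p \<in> K\<close> K_strip by auto
    ultimately have "\<phi> p = \<phi> (Complex 0 t1)" by (auto simp: constant_on_def)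
    then show ?thesis using lines[of "Complex 0 t1"] by simp
  qed
  then show ?thesis using bound[OF z] by simp
qed

lemma integral_periodic_of_nat:
  fixes p :: "real \<Rightarrow> real"
  assumes cont: "continuous_on UNIV p" and per: "\<And>x. p (x + 1) = p x"
  shows "integral {0..real N} p = real N * integral {0..1} p"
proof (induction N)
  case (Suc N)
  have shift_N: "p (x + real n) = p x" for n x
  proof (induction n)
    case (Suc n)
    then show ?case using per[of "x + real n"] by (simp add: add_ac)
  qed simp
  have "integral {0..real (Suc N)} p = integral {0..real N} p + integral {real N..real N + 1} p"
    using Henstock_Kurzweil_Integration.integral_combine[of 0 "real N" "real N + 1" p]
      integrable_continuous_interval[OF continuous_on_subset[OF cont]] by (simp add: add.commute)
  also have "integral {real N..real N + 1} p = integral {0..1} p"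
    using integral_shift_Icc_real[of 0 1 p "real N"] by (simp add: o_def shift_N add.commute)
  finally show ?case using Suc.IH by (simp add: algebra_simps)
qed simp

text \<open>The function \<open>t \<mapsto> -1/D t - t/K\<close> is nondecreasing.\<close>

lemma le_div_of_sq_le_mult_deriv:
  fixes D e :: "real \<Rightarrow> real"
  assumes "a < c" and deriv: "\<And>t. t \<in> {a..c} \<Longrightarrow> (D has_real_derivative e t) (at t)"
    and sq_le: "\<And>t. t \<in> {a..c} \<Longrightarrow> (D t)\<^sup>2 \<le> K * e t" and "0 < K" and "0 \<le> D a"
  shows "D a \<le> K / (c - a)"
proof (cases "D a = 0")
  case True
  then show ?thesis using \<open>0 < K\<close> \<open>a < c\<close> by simp
next
  case False
  then have "0 < D a" using \<open>0 \<le> D a\<close> by simp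
  have "0 \<le> e t" if "t \<in> {a..c}" for t
    using sq_le[OF that] \<open>0 < K\<close> by (smt (verit) zero_le_mult_iff zero_le_power2)
  then have "D a \<le> D t" if "t \<in> {a..c}" for t
    using that deriv by (intro deriv_nonneg_imp_mono[of a t D e]) auto
  then have D_pos: "0 < D t" if "t \<in> {a..c}" for t
    using that \<open>0 < D a\<close> by fastforce
  define \<psi> where "\<psi> = (\<lambda>t. - inverse (D t) - t / K)"
  have deriv_\<psi>: "(\<psi> has_real_derivative (e t / (D t)\<^sup>2 - 1 / K)) (at t)" if "t \<in> {a..c}" for t
  proof -
    have "((\<lambda>t. inverse (D t)) has_real_derivative - (e t / (D t)\<^sup>2)) (at t)"
      using DERIV_inverse_fun[OF deriv[OF that]] D_pos[OF that]
      by (simp add: power2_eq_square divide_inverse)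
    from DERIV_diff[OF DERIV_minus[OF this] DERIV_cdivide[OF DERIV_ident, of K]]
    show ?thesis by (simp add: \<psi>_def)
  qed
  have "0 \<le> e t / (D t)\<^sup>2 - 1 / K" if "t \<in> {a..c}" for t
    using sq_le[OF that] D_pos[OF that] \<open>0 < K\<close> by (simp add: field_simps)
  then have "\<psi> a \<le> \<psi> c"
    using deriv_\<psi> \<open>a < c\<close> by (intro deriv_nonneg_imp_mono[of a c \<psi>]) auto
  then have "(c - a) / K \<le> inverse (D a) - inverse (D c)"
    unfolding \<psi>_def diff_divide_distrib by linarith
  also have "\<dots> \<le> inverse (D a)"
    using D_pos[of c] \<open>a < c\<close> by simp
  finally show ?thesis
    using \<open>0 < D a\<close> \<open>0 < K\<close> \<open>a < c\<close> by (simp add: field_simps)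
qed

lemma cyl_dist_le: "cyl_dist u v \<le> cmod (u - v - of_int k)"
  unfolding cyl_dist_def by (rule cINF_lower) (auto intro: bdd_belowI[of _ 0])

locale cylinder_lift =
  fixes b :: real and F :: "complex \<Rightarrow> complex"
  assumes lift: "cyl_embedding_lift b F"
begin

lemma holomorphic_F: "F holomorphic_on strip b"
  and F_add_1: "z \<in> strip b \<Longrightarrow> F (z + 1) = F z + 1"
  and F_diff_Ints: "z \<in> strip b \<Longrightarrow> w \<in> strip b \<Longrightarrow> F z - F w \<in> \<int> \<Longrightarrow> z - w \<in> \<int>"
  using lift by (auto simp: cyl_embedding_lift_def)

lemma inj_on_F: "inj_on F (strip b)"
proof (rule inj_onI)
  fix z w assume "z \<in> strip b" "w \<in> strip b" "F z = F w"
  then have "z - w \<in> \<int>" using F_diff_Ints by simp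
  then obtain k where "z - w = of_int k" by (auto elim: Ints_cases)
  then have k: "z = w + of_int k" by (simp add: algebra_simps)
  then have "F z = F w + of_int k"
    using shift_of_int_strip[of b F 1 w k] F_add_1 \<open>w \<in> strip b\<close> by simp
  with \<open>F z = F w\<close> k show "z = w" by simp
qed

lemma F_has_field_derivative: "z \<in> strip b \<Longrightarrow> (F has_field_derivative deriv F z) (at z)"
  using holomorphic_derivI[OF holomorphic_F open_strip] by blast

lemma continuous_on_deriv_F: "continuous_on (strip b) (deriv F)"
  using holomorphic_deriv[OF holomorphic_F open_strip] holomorphic_on_imp_continuous_on by blast

lemma deriv_F_add_1:
  assumes "z \<in> strip b" shows "deriv F (z + 1) = deriv F z"
proof (rule DERIV_unique)
  have "((\<lambda>w. w + 1) has_field_derivative 1) (at z)"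
    by (auto intro!: derivative_eq_intros)
  from DERIV_chain2[where g = "\<lambda>w. w + 1", OF F_has_field_derivative this] assms
  have "((\<lambda>w. F (w + 1)) has_field_derivative deriv F (z + 1)) (at z)"
    by simp
  then show "((\<lambda>w. F w + 1) has_field_derivative deriv F (z + 1)) (at z)"
    by (rule has_field_derivative_transform_within_open[OF _ open_strip assms]) (simp add: F_add_1)
  show "((\<lambda>w. F w + 1) has_field_derivative deriv F z) (at z)"
    using F_has_field_derivative[OF assms] by (auto intro!: derivative_eq_intros)
qed

definition disp :: "complex \<Rightarrow> complex" where "disp z = F z - z"
definition disp' :: "complex \<Rightarrow> complex" where "disp' z = deriv F z - 1"

lemma disp_add_1: "z \<in> strip b \<Longrightarrow> disp (z + 1) = disp z"
  by (simp add: disp_def F_add_1)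

lemma disp_has_field_derivative: "z \<in> strip b \<Longrightarrow> (disp has_field_derivative disp' z) (at z)"
  unfolding disp_def[abs_def] disp'_def using F_has_field_derivative by (auto intro!: derivative_eq_intros)

lemma holomorphic_disp: "disp holomorphic_on strip b"
  unfolding disp_def[abs_def] by (intro holomorphic_intros holomorphic_F)

lemma continuous_on_disp': "continuous_on (strip b) disp'"
  unfolding disp'_def[abs_def] by (intro continuous_intros continuous_on_deriv_F)

lemma has_integral_disp'_horizontal:
  assumes "\<bar>y\<bar> < b" shows "((\<lambda>x. disp' (Complex x y)) has_integral 0) {0..1}"
proof -
  have "disp (Complex 0 y + 1) = disp (Complex 0 y)"
    using assms by (simp add: disp_add_1)
  moreover have "Complex 0 y + 1 = Complex 1 y" by (simp add: complex_eq_iff)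
  ultimately show ?thesis
    using has_integral_horizontal[of 0 1 disp disp' y] disp_has_field_derivative assms by simp
qed

definition mean :: complex where "mean = integral {0..1} (\<lambda>x. disp (Complex x 0))"

text \<open>A primitive \<open>P\<close> of \<open>disp\<close> has constant \<open>P (z + 1) - P z\<close>, which is the integral of
  \<open>disp\<close> over any horizontal period segment.\<close>

lemma has_integral_disp_horizontal:
  assumes "\<bar>y\<bar> < b" shows "((\<lambda>x. disp (Complex x y)) has_integral mean) {0..1}"
proof -
  obtain P where "\<And>z. z \<in> strip b \<Longrightarrow> (P has_field_derivative disp z) (at z within strip b)"
    using holomorphic_convex_primitive'[OF convex_strip open_strip holomorphic_disp] by blast
  then have P: "(P has_field_derivative disp z) (at z)" if "z \<in> strip b" for z
    using that at_within_open[OF that open_strip] by metis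
  have "\<exists>c. \<forall>z\<in>strip b. P (z + 1) - P z = c"
  proof (rule has_field_derivative_zero_constant[OF convex_strip])
    fix z assume "z \<in> strip b"
    have "((\<lambda>w. w + 1) has_field_derivative 1) (at z)"
      by (auto intro!: derivative_eq_intros)
    from DERIV_chain2[where g = "\<lambda>w. w + 1", OF P this] \<open>z \<in> strip b\<close>
    have "((\<lambda>w. P (w + 1)) has_field_derivative disp (z + 1) * 1) (at z)"
      by simp
    from DERIV_diff[OF this P[OF \<open>z \<in> strip b\<close>]]
    show "((\<lambda>w. P (w + 1) - P w) has_field_derivative 0) (at z within strip b)"
      using disp_add_1[OF \<open>z \<in> strip b\<close>] by (simp add: has_field_derivative_at_within)
  qed
  then obtain c where c: "\<And>z. z \<in> strip b \<Longrightarrow> P (z + 1) - P z = c" by blast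
  have line: "((\<lambda>x. disp (Complex x y')) has_integral c) {0..1}" if "\<bar>y'\<bar> < b" for y'
  proof -
    have "Complex 0 y' + 1 = Complex 1 y'" by (simp add: complex_eq_iff)
    then have "P (Complex 1 y') - P (Complex 0 y') = c"
      using c[of "Complex 0 y'"] that by simp
    then show ?thesis
      using has_integral_horizontal[of 0 1 P disp y'] P that by simp
  qed
  have "c = mean"
    using integral_unique[OF line[of 0]] assms by (simp add: mean_def)
  then show ?thesis using line[OF assms] by simp
qed

definition line_length :: "real \<Rightarrow> real"
  where "line_length y = integral {0..1} (\<lambda>x. cmod (disp' (Complex x y)))"

definition line_energy :: "real \<Rightarrow> real"
  where "line_energy y = integral {0..1} (\<lambda>x. (cmod (disp' (Complex x y)))\<^sup>2)"

lemma integrable_norm_disp':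
  "\<bar>y\<bar> < b \<Longrightarrow> (\<lambda>x. cmod (disp' (Complex x y))) integrable_on {u..v}"
  by (intro integrable_continuous_interval continuous_on_norm continuous_on_horizontal[OF continuous_on_disp'])

lemma integrable_norm_disp'_sq:
  "\<bar>y\<bar> < b \<Longrightarrow> (\<lambda>x. (cmod (disp' (Complex x y)))\<^sup>2) integrable_on {u..v}"
  by (intro integrable_continuous_interval continuous_intros continuous_on_horizontal[OF continuous_on_disp'])

lemma line_length_nonneg: "\<bar>y\<bar> < b \<Longrightarrow> 0 \<le> line_length y"
  unfolding line_length_def by (rule integral_nonneg[OF integrable_norm_disp']) auto

lemma line_energy_nonneg: "\<bar>y\<bar> < b \<Longrightarrow> 0 \<le> line_energy y"
  unfolding line_energy_def by (rule integral_nonneg[OF integrable_norm_disp'_sq]) auto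

text \<open>Cauchy--Schwarz, from \<open>\<integral> (\<bar>disp'\<bar> - line_length y)\<^sup>2 \<ge> 0\<close>.\<close>

lemma line_length_le_sqrt_line_energy:
  assumes "\<bar>y\<bar> < b" shows "line_length y \<le> sqrt (line_energy y)"
proof -
  define w where "w = (\<lambda>x. cmod (disp' (Complex x y)))"
  define l where "l = line_length y"
  have "(w has_integral l) {0..1}"
    using integrable_norm_disp'[OF assms] by (simp add: w_def l_def line_length_def has_integral_integral)
  moreover have "((\<lambda>x. (w x)\<^sup>2) has_integral line_energy y) {0..1}"
    using integrable_norm_disp'_sq[OF assms] by (simp add: w_def line_energy_def has_integral_integral)
  ultimately have "((\<lambda>x. (w x)\<^sup>2 - 2 * l * w x + l\<^sup>2) has_integral line_energy y - 2 * l * l + l\<^sup>2) {0..1}"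
    using has_integral_const_real[of "l\<^sup>2" 0 1]
    by (intro has_integral_add has_integral_diff has_integral_mult_right) simp_all
  moreover have "0 \<le> (w x)\<^sup>2 - 2 * l * w x + l\<^sup>2" for x
    using zero_le_power2[of "w x - l"] by (simp add: power2_eq_square algebra_simps)
  ultimately have "0 \<le> line_energy y - 2 * l * l + l\<^sup>2"
    by (rule has_integral_nonneg)
  then have "l\<^sup>2 \<le> line_energy y"
    by (simp add: power2_eq_square)
  then show ?thesis
    using line_length_nonneg[OF assms] real_le_rsqrt by (simp add: l_def)
qed

lemma norm_disp_diff_le_line_length:
  assumes "\<bar>y\<bar> < b" "s \<in> {0..1}" "x \<in> {0..1}"
  shows "cmod (disp (Complex x y) - disp (Complex s y)) \<le> line_length y"
proof -
  have bound: "cmod (disp (Complex t y) - disp (Complex s y)) \<le> line_length y"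
    if "s \<in> {0..1}" "t \<in> {0..1}" "s \<le> t" for s t
  proof -
    have I: "((\<lambda>u. disp' (Complex u y)) has_integral disp (Complex t y) - disp (Complex s y)) {s..t}"
      using has_integral_horizontal[of s t disp disp' y] disp_has_field_derivative assms(1) that by simp
    have "cmod (disp (Complex t y) - disp (Complex s y)) \<le> integral {s..t} (\<lambda>u. cmod (disp' (Complex u y)))"
      using integral_norm_bound_integral[OF has_integral_integrable[OF I] integrable_norm_disp'[OF assms(1)]]
      by (simp add: integral_unique[OF I])
    also have "\<dots> \<le> line_length y"
      unfolding line_length_def using that
      by (intro integral_subset_le integrable_norm_disp'[OF assms(1)]) auto
    finally show ?thesis .
  qed
  show ?thesis
    using bound[of s x] bound[of x s] assms by (cases "s \<le> x") (auto simp: norm_minus_commute)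
qed

lemma norm_disp_sub_mean_le_line_length:
  assumes "z \<in> strip b" shows "cmod (disp z - mean) \<le> line_length (Im z)"
proof -
  define x where "x = Re z - of_int \<lfloor>Re z\<rfloor>"
  have "\<bar>Im z\<bar> < b" using assms by (simp add: strip_def)
  have "0 \<le> x" "x \<le> 1" unfolding x_def by linarith+
  then have "x \<in> {0..1}" by simp
  have "z = Complex x (Im z) + of_int \<lfloor>Re z\<rfloor>" by (simp add: complex_eq_iff x_def)
  then have "disp z = disp (Complex x (Im z))"
    using shift_of_int_strip[of b disp 0 "Complex x (Im z)" "\<lfloor>Re z\<rfloor>"] disp_add_1 \<open>\<bar>Im z\<bar> < b\<close>
    by simp
  moreover have "((\<lambda>s. disp (Complex x (Im z)) - disp (Complex s (Im z))) has_integral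
                   disp (Complex x (Im z)) - mean) (cbox 0 1)"
    using has_integral_diff[OF has_integral_const_real has_integral_disp_horizontal[OF \<open>\<bar>Im z\<bar> < b\<close>]]
    by simp
  then have "cmod (disp (Complex x (Im z)) - mean) \<le> line_length (Im z) * measure lborel (cbox 0 (1::real))"
    using line_length_nonneg[OF \<open>\<bar>Im z\<bar> < b\<close>] norm_disp_diff_le_line_length \<open>\<bar>Im z\<bar> < b\<close> \<open>x \<in> {0..1}\<close>
    by (intro has_integral_bound) auto
  ultimately show ?thesis by simp
qed

lemma norm_disp_sub_mean_le:
  assumes "0 \<le> h" "h < b" "\<bar>Im z\<bar> \<le> h"
  shows "cmod (disp z - mean) \<le> line_length h + line_length (-h)"
proof (rule periodic_norm_le_between_lines[where \<phi> = "\<lambda>z. disp z - mean"])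
  show "(\<lambda>z. disp z - mean) holomorphic_on strip b"
    by (intro holomorphic_intros holomorphic_disp)
  show "cmod (disp w - mean) \<le> line_length h + line_length (-h)" if "Im w = - h \<or> Im w = h" for w
    using that assms norm_disp_sub_mean_le_line_length[of w] line_length_nonneg[of h] line_length_nonneg[of "-h"]
    by (force simp: strip_def)
qed (use assms disp_add_1 in auto)

lemma integral_norm_deriv_F_sq:
  assumes "\<bar>y\<bar> < b"
  shows "integral {0..real N} (\<lambda>x. (cmod (deriv F (Complex x y)))\<^sup>2) = real N * (1 + line_energy y)"
proof -
  have "integral {0..real N} (\<lambda>x. (cmod (deriv F (Complex x y)))\<^sup>2) =
        real N * integral {0..1} (\<lambda>x. (cmod (deriv F (Complex x y)))\<^sup>2)"
  proof (rule integral_periodic_of_nat)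
    show "continuous_on UNIV (\<lambda>x. (cmod (deriv F (Complex x y)))\<^sup>2)"
      by (intro continuous_intros continuous_on_horizontal[OF continuous_on_deriv_F assms])
    have "Complex (x + 1) y = Complex x y + 1" for x by (simp add: complex_eq_iff)
    then show "(cmod (deriv F (Complex (x + 1) y)))\<^sup>2 = (cmod (deriv F (Complex x y)))\<^sup>2" for x
      using deriv_F_add_1[of "Complex x y"] assms by simp
  qed
  moreover
  have "(cmod (deriv F w))\<^sup>2 = 1 + 2 * Re (disp' w) + (cmod (disp' w))\<^sup>2" for w
    unfolding disp'_def cmod_power2 by (simp add: power2_eq_square algebra_simps)
  then have "((\<lambda>x. (cmod (deriv F (Complex x y)))\<^sup>2) has_integral 1 + 2 * 0 + line_energy y) {0..1}"
    using has_integral_linear[OF has_integral_disp'_horizontal[OF assms] bounded_linear_Re]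
      integrable_norm_disp'_sq[OF assms] has_integral_const_real[of "1::real" 0 1]
    by (simp only:) (intro has_integral_add has_integral_mult_right;
        simp add: o_def line_energy_def has_integral_integral)
  ultimately show ?thesis by (simp add: integral_unique)
qed

lemma continuous_on_line_energy: "continuous_on {-b<..<b} line_energy"
proof -
  have "continuous_on ({-b<..<b} \<times> cbox 0 1) (\<lambda>(y, x). (cmod (disp' (Complex x y)))\<^sup>2)"
    unfolding case_prod_unfold Complex_eq
    by (intro continuous_intros continuous_on_compose2[OF continuous_on_disp']) (auto simp: strip_def)
  from integral_continuous_on_param[OF this] show ?thesis
    by (simp add: line_energy_def[abs_def])
qed

lemma integral_norm_deriv_F_sq_rectangle:
  assumes "0 \<le> h" "h < b"
  shows "integral (cbox (-h, 0) (h, real N)) (\<lambda>(y, x). (cmod (deriv F (Complex x y)))\<^sup>2) =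
         real N * (2 * h + integral {-h..h} line_energy)"
proof -
  have "continuous_on (cbox (-h, 0) (h, real N)) (\<lambda>(y, x). (cmod (deriv F (Complex x y)))\<^sup>2)"
    unfolding case_prod_unfold Complex_eq using assms
    by (intro continuous_intros continuous_on_compose2[OF continuous_on_deriv_F])
      (auto simp: strip_def cbox_Pair_iff)
  then have "integral (cbox (-h, 0) (h, real N)) (\<lambda>(y, x). (cmod (deriv F (Complex x y)))\<^sup>2) =
             integral {-h..h} (\<lambda>y. integral {0..real N} (\<lambda>x. (cmod (deriv F (Complex x y)))\<^sup>2))"
    by (simp add: integral_prod_continuous)
  also have "\<dots> = integral {-h..h} (\<lambda>y. real N * (1 + line_energy y))"
    using assms by (intro integral_cong integral_norm_deriv_F_sq) auto
  also have "\<dots> = real N * (2 * h + integral {-h..h} line_energy)"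
  proof -
    have "line_energy integrable_on {-h..h}"
      using assms by (intro integrable_continuous_interval continuous_on_subset[OF continuous_on_line_energy]) auto
    then show ?thesis
      using has_integral_const_real[of "1::real" "-h" h] assms
      by (intro integral_unique has_integral_mult_right has_integral_add) auto
  qed
  finally show ?thesis .
qed

text \<open>By the maximum modulus bound, \<open>F\<close> maps \<open>[0, N] \<times> [-h, h]\<close> injectively into a rectangle of
  size \<open>(N + 2L) \<times> (2h + 2L)\<close>, where \<open>L = line_length h + line_length (-h)\<close>; compare areas and
  let \<open>N \<rightarrow> \<infinity>\<close>.\<close>

lemma integral_line_energy_le_line_length:
  assumes "0 < h" "h < b"
  shows "integral {-h..h} line_energy \<le> 2 * (line_length h + line_length (-h))"
proof -
  define L where "L = line_length h + line_length (-h)"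
  define E where "E = integral {-h..h} line_energy"
  have area: "real N * (2 * h + E) \<le> (real N + 2 * L) * (2 * h + 2 * L)" for N :: nat
  proof -
    have rect: "Complex x y \<in> strip b \<and>
        F (Complex x y) \<in> cbox (Complex (Re mean - L) (Im mean - h - L)) (Complex (real N + Re mean + L) (Im mean + h + L))"
      if "0 \<le> x" "x \<le> real N" "-h \<le> y" "y \<le> h" for x y
    proof -
      have "cmod (disp (Complex x y) - mean) \<le> L"
        unfolding L_def using assms that by (intro norm_disp_sub_mean_le) auto
      then have "\<bar>Re (disp (Complex x y) - mean)\<bar> \<le> L" "\<bar>Im (disp (Complex x y) - mean)\<bar> \<le> L"
        using abs_Re_le_cmod abs_Im_le_cmod order_trans by blast+
      moreover have "F (Complex x y) = Complex x y + disp (Complex x y)" by (simp add: disp_def)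
      ultimately show ?thesis
        using assms that by (auto simp: in_cbox_complex_iff abs_le_iff)
    qed
    have "integral (cbox (-h, 0) (h, real N)) (\<lambda>(y, x). (cmod (deriv F (Complex x y)))\<^sup>2) \<le>
          (real N + Re mean + L - (Re mean - L)) * (Im mean + h + L - (Im mean - h - L))"
      by (rule integral_norm_deriv_sq_le_area[OF holomorphic_F open_strip inj_on_F rect]) (use assms in auto)
    then show ?thesis
      using integral_norm_deriv_F_sq_rectangle assms by (simp add: E_def algebra_simps)
  qed
  show ?thesis
  proof (rule ccontr)
    assume "\<not> ?thesis"
    then have "0 < E - 2 * L" by (simp add: E_def L_def)
    then obtain N :: nat where "2 * L * (2 * h + 2 * L) < real N * (E - 2 * L)"
      using ex_less_of_nat_mult by blast
    with area[of N] show False by (simp add: algebra_simps)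
  qed
qed

definition strip_energy :: "real \<Rightarrow> real"
  where "strip_energy h = integral {0..h} (\<lambda>s. line_energy s + line_energy (-s))"

lemma continuous_on_line_energy_sym:
  "c < b \<Longrightarrow> continuous_on {0..c} (\<lambda>s. line_energy s + line_energy (-s))"
  by (intro continuous_on_add continuous_on_subset[OF continuous_on_line_energy]
      continuous_on_compose2[OF continuous_on_line_energy continuous_on_minus[OF continuous_on_id]]) auto

lemma strip_energy_eq_integral_line_energy:
  assumes "0 \<le> h" "h < b" shows "strip_energy h = integral {-h..h} line_energy"
proof -
  have cont: "continuous_on {-h..h} line_energy"
    using assms by (intro continuous_on_subset[OF continuous_on_line_energy]) auto
  have "strip_energy h = integral {0..h} line_energy + integral {0..h} (\<lambda>s. line_energy (-s))"
    unfolding strip_energy_def using cont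
    by (intro integral_add integrable_continuous_interval continuous_on_subset[OF cont]
        continuous_on_compose2[OF cont continuous_on_minus[OF continuous_on_id]]) auto
  also have "integral {0..h} (\<lambda>s. line_energy (-s)) = integral {-h..0} line_energy"
    using Henstock_Kurzweil_Integration.integral_reflect_real[of h 0 "\<lambda>s. line_energy (-s)"] by simp
  also have "integral {0..h} line_energy + \<dots> = integral {-h..h} line_energy"
    using Henstock_Kurzweil_Integration.integral_combine[of "-h" 0 h line_energy] assms
      integrable_continuous_interval[OF cont] by simp
  finally show ?thesis .
qed

lemma strip_energy_nonneg: "0 \<le> h \<Longrightarrow> h < b \<Longrightarrow> 0 \<le> strip_energy h"
  unfolding strip_energy_def
  by (intro integral_nonneg integrable_continuous_interval continuous_on_line_energy_sym)
    (auto intro!: add_nonneg_nonneg line_energy_nonneg)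

lemma strip_energy_has_real_derivative:
  assumes "0 < t" "t < b"
  shows "(strip_energy has_real_derivative line_energy t + line_energy (-t)) (at t)"
proof -
  have "t < (t + b) / 2" "(t + b) / 2 < b" using assms by simp_all
  then have "(strip_energy has_real_derivative line_energy t + line_energy (-t)) (at t within {0..(t + b) / 2})"
    unfolding strip_energy_def[abs_def] using assms
    by (intro integral_has_real_derivative continuous_on_line_energy_sym) auto
  then show ?thesis
    using at_within_Icc_at[of 0 t "(t + b) / 2"] assms \<open>t < (t + b) / 2\<close> by simp
qed

lemma strip_energy_sq_le:
  assumes "0 < h" "h < b" shows "(strip_energy h)\<^sup>2 \<le> 8 * (line_energy h + line_energy (-h))"
proof -
  have "\<bar>h\<bar> < b" "\<bar>-h\<bar> < b" using assms by auto
  have "strip_energy h \<le> 2 * (line_length h + line_length (-h))"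
    using integral_line_energy_le_line_length strip_energy_eq_integral_line_energy assms by simp
  also have "\<dots> \<le> 2 * (sqrt (line_energy h) + sqrt (line_energy (-h)))"
    using line_length_le_sqrt_line_energy \<open>\<bar>h\<bar> < b\<close> \<open>\<bar>-h\<bar> < b\<close> by (simp add: add_mono)
  finally have "(strip_energy h)\<^sup>2 \<le> (2 * (sqrt (line_energy h) + sqrt (line_energy (-h))))\<^sup>2"
    using strip_energy_nonneg assms by (intro power_mono) auto
  also have "\<dots> \<le> 8 * ((sqrt (line_energy h))\<^sup>2 + (sqrt (line_energy (-h)))\<^sup>2)"
    using zero_le_power2[of "sqrt (line_energy h) - sqrt (line_energy (-h))"]
    by (simp add: power2_eq_square algebra_simps)
  also have "\<dots> = 8 * (line_energy h + line_energy (-h))"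
    using line_energy_nonneg \<open>\<bar>h\<bar> < b\<close> \<open>\<bar>-h\<bar> < b\<close> by simp
  finally show ?thesis .
qed

lemma strip_energy_le:
  assumes "0 < a" "a < b" shows "strip_energy a \<le> 16 / (b - a)"
proof -
  define c where "c = (a + b) / 2"
  have "strip_energy a \<le> 8 / (c - a)"
  proof (rule le_div_of_sq_le_mult_deriv)
    fix t assume "t \<in> {a..c}"
    then have "0 < t" "t < b" using assms by (auto simp: c_def)
    then show "(strip_energy has_real_derivative line_energy t + line_energy (-t)) (at t)"
      "(strip_energy t)\<^sup>2 \<le> 8 * (line_energy t + line_energy (-t))"
      by (rule strip_energy_has_real_derivative, rule strip_energy_sq_le)
  qed (use assms strip_energy_nonneg in \<open>auto simp: c_def\<close>)
  also have "8 / (c - a) = 16 / (b - a)" by (simp add: c_def field_simps)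
  finally show ?thesis .
qed

lemma exists_height_line_energy_le_strip_energy:
  assumes "0 \<le> y" "y + 1 < b"
  obtains s where "s \<in> {y..y + 1}" "line_energy s + line_energy (-s) \<le> strip_energy (y + 1)"
proof -
  define e where "e = (\<lambda>s. line_energy s + line_energy (-s))"
  have cont: "continuous_on {y..y + 1} e"
    unfolding e_def using assms by (intro continuous_on_subset[OF continuous_on_line_energy_sym]) auto
  obtain s where s: "s \<in> {y..y + 1}" and s_min: "\<And>t. t \<in> {y..y + 1} \<Longrightarrow> e s \<le> e t"
    using continuous_attains_inf[OF compact_Icc _ cont] by auto
  have "e s = integral {y..y + 1} (\<lambda>t. e s)" by simp
  also have "\<dots> \<le> integral {y..y + 1} e"
    using s_min cont by (intro integral_le integrable_continuous_interval) auto
  also have "\<dots> \<le> strip_energy (y + 1)"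
    unfolding strip_energy_def e_def[symmetric] using cont assms
    by (intro integral_subset_le integrable_continuous_interval continuous_on_line_energy_sym[unfolded e_def[symmetric]])
      (auto simp: e_def intro!: add_nonneg_nonneg line_energy_nonneg)
  finally show ?thesis using that s by (simp add: e_def)
qed

lemma norm_disp_sub_mean_le_sqrt_line_energy:
  assumes "0 \<le> s" "s < b" "\<bar>Im w\<bar> \<le> s"
  shows "cmod (disp w - mean) \<le> 2 * sqrt (line_energy s + line_energy (-s))"
proof -
  have "cmod (disp w - mean) \<le> line_length s + line_length (-s)"
    using assms by (rule norm_disp_sub_mean_le)
  also have "\<dots> \<le> sqrt (line_energy s) + sqrt (line_energy (-s))"
    using line_length_le_sqrt_line_energy assms by (simp add: add_mono)
  also have "\<dots> \<le> 2 * sqrt (line_energy s + line_energy (-s))"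
  proof -
    have "0 \<le> line_energy s" "0 \<le> line_energy (-s)"
      using line_energy_nonneg assms by simp_all
    then have "sqrt (line_energy s) \<le> sqrt (line_energy s + line_energy (-s))"
      "sqrt (line_energy (-s)) \<le> sqrt (line_energy s + line_energy (-s))"
      by (simp_all add: real_sqrt_le_mono)
    then show ?thesis by linarith
  qed
  finally show ?thesis .
qed

text \<open>Apply the previous bound to \<open>z\<close> and \<open>0\<close> at a height where the line energies are at most
  their average over \<open>[\<bar>Im z\<bar>, \<bar>Im z\<bar> + 1]\<close>.\<close>

lemma norm_disp_sub_disp_0_le:
  assumes "\<bar>Im z\<bar> + 1 < b"
  shows "cmod (disp z - disp 0) \<le> 16 / sqrt (b - \<bar>Im z\<bar> - 1)"
proof -
  define A where "A = \<bar>Im z\<bar> + 1"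
  obtain s where s: "s \<in> {\<bar>Im z\<bar>..A}" and e_s: "line_energy s + line_energy (-s) \<le> strip_energy A"
    using exists_height_line_energy_le_strip_energy[of "\<bar>Im z\<bar>"] assms unfolding A_def by auto
  note e_s
  also have "strip_energy A \<le> 16 / (b - A)"
    using assms by (intro strip_energy_le) (auto simp: A_def)
  finally have sqrt_le: "sqrt (line_energy s + line_energy (-s)) \<le> sqrt (16 / (b - A))"
    by (rule real_sqrt_le_mono)
  have "0 \<le> s" "s < b" using s assms by (auto simp: A_def)
  have near_mean: "cmod (disp w - mean) \<le> 2 * sqrt (16 / (b - A))" if "\<bar>Im w\<bar> \<le> s" for w
    using norm_disp_sub_mean_le_sqrt_line_energy[OF \<open>0 \<le> s\<close> \<open>s < b\<close> that] sqrt_le by linarith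
  have "cmod (disp z - disp 0) \<le> cmod (disp z - mean) + cmod (disp 0 - mean)"
    using norm_triangle_ineq4[of "disp z - mean" "disp 0 - mean"] by simp
  also have "\<dots> \<le> 4 * sqrt (16 / (b - A))"
    using near_mean[of z] near_mean[of 0] s \<open>0 \<le> s\<close> by simp
  also have "\<dots> = 16 / sqrt (b - A)"
    using assms by (simp add: A_def real_sqrt_divide field_simps)
  finally show ?thesis by (simp add: A_def algebra_simps)
qed

end

theorem theorem6p1:
  fixes \<epsilon> :: real
  assumes "\<epsilon> > 0"
  shows "\<exists>c>0. \<forall>b>c. \<forall>F. cyl_embedding_lift b F \<and> F 0 \<in> \<int> \<longrightarrow>
           (\<forall>z\<in>strip (b - c). cyl_dist (F z) z \<le> \<epsilon>)"
proof (intro exI[of _ "1 + 256 / \<epsilon>\<^sup>2"] conjI allI impI ballI)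
  fix b F z
  assume "1 + 256 / \<epsilon>\<^sup>2 < b" "cyl_embedding_lift b F \<and> F 0 \<in> \<int>" "z \<in> strip (b - (1 + 256 / \<epsilon>\<^sup>2))"
  then have lift: "cyl_embedding_lift b F" and "F 0 \<in> \<int>"
    and height: "(16 / \<epsilon>)\<^sup>2 < b - \<bar>Im z\<bar> - 1"
    by (auto simp: strip_def power_divide)
  interpret cylinder_lift b F by (rule cylinder_lift.intro[OF lift])
  obtain k where "F 0 = of_int k" using \<open>F 0 \<in> \<int>\<close> by (auto elim: Ints_cases)
  have "\<bar>Im z\<bar> + 1 < b" using height by (smt (verit) zero_le_power2)
  have "16 / \<epsilon> < sqrt (b - \<bar>Im z\<bar> - 1)" using height by (rule real_less_rsqrt)
  have "cyl_dist (F z) z \<le> cmod (F z - z - of_int k)" by (rule cyl_dist_le)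
  also have "\<dots> = cmod (disp z - disp 0)" by (simp add: disp_def \<open>F 0 = of_int k\<close>)
  also have "\<dots> \<le> 16 / sqrt (b - \<bar>Im z\<bar> - 1)" using \<open>\<bar>Im z\<bar> + 1 < b\<close> by (rule norm_disp_sub_disp_0_le)
  also have "\<dots> \<le> \<epsilon>"
  proof -
    have "0 < 16 / \<epsilon>" using assms by simp
    with \<open>16 / \<epsilon> < sqrt (b - \<bar>Im z\<bar> - 1)\<close> \<open>\<bar>Im z\<bar> + 1 < b\<close> assms show ?thesis
      by (simp add: pos_divide_less_eq divide_le_eq mult.commute)
  qed
  finally show "cyl_dist (F z) z \<le> \<epsilon>" .
qed (simp add: add_pos_nonneg)

end
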